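(* Let $L$ be a regular language over a nonempty finite alphabet $A$ with minimal automaton $\mathcal{A}_L$. Then $\mu(L)=1$ if and only if $\mathcal{A}_L$ is a zero automaton whose (unique) sink state is final, and $\mu(L)=0$ if and only if $\mathcal{A}_L$ is a zero automaton whose sink state is non-final.
   Context: Automata are complete, deterministic, finite and accessible, $\langle Q,A,\cdot,q_0,F\rangle$. $\mu(L)=\lim_{n\to\infty}|L\cap A^n|/|A|^n$ when the limit exists. A sink state $q$ satisfies $q\cdot a=q$ for all $a\in A$. A zero automaton is an automaton that has a sink state and a synchronising word $w$ (a word such that $p\cdot w$ is the same state for all $p\in Q$). *)

theory Defs
  imports Complex_Main
begin

definition words :: "'a set \<Rightarrow> nat \<Rightarrow> 'a list set" where
  "words A n = {w. set w \<subseteq> A \<and> length w = n}"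

definition has_density :: "'a set \<Rightarrow> 'a list set \<Rightarrow> real \<Rightarrow> bool" where
  "has_density A L d \<longleftrightarrow>
     (\<lambda>n. real (card (L \<inter> words A n)) / real (card A ^ n)) \<longlonglongrightarrow> d"

definition dstar :: "('s \<Rightarrow> 'a \<Rightarrow> 's) \<Rightarrow> 's \<Rightarrow> 'a list \<Rightarrow> 's" where
  "dstar \<delta> q w = foldl \<delta> q w"

definition dfa :: "'a set \<Rightarrow> 's set \<Rightarrow> ('s \<Rightarrow> 'a \<Rightarrow> 's) \<Rightarrow> 's \<Rightarrow> 's set \<Rightarrow> bool" where
  "dfa A Q \<delta> q0 F \<longleftrightarrow> finite Q \<and> q0 \<in> Q \<and> F \<subseteq> Q
     \<and> (\<forall>q\<in>Q. \<forall>a\<in>A. \<delta> q a \<in> Q)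
     \<and> (\<forall>q\<in>Q. \<exists>w. set w \<subseteq> A \<and> dstar \<delta> q0 w = q)"

definition dfa_lang :: "'a set \<Rightarrow> ('s \<Rightarrow> 'a \<Rightarrow> 's) \<Rightarrow> 's \<Rightarrow> 's set \<Rightarrow> 'a list set" where
  "dfa_lang A \<delta> q0 F = {w. set w \<subseteq> A \<and> dstar \<delta> q0 w \<in> F}"

definition regular :: "'a set \<Rightarrow> 'a list set \<Rightarrow> bool" where
  "regular A L \<longleftrightarrow> (\<exists>(Q::nat set) \<delta> q0 F. dfa A Q \<delta> q0 F \<and> dfa_lang A \<delta> q0 F = L)"

definition is_sink :: "'a set \<Rightarrow> ('s \<Rightarrow> 'a \<Rightarrow> 's) \<Rightarrow> 's \<Rightarrow> bool" where
  "is_sink A \<delta> q \<longleftrightarrow> (\<forall>a\<in>A. \<delta> q a = q)"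

definition synchronising :: "'a set \<Rightarrow> 's set \<Rightarrow> ('s \<Rightarrow> 'a \<Rightarrow> 's) \<Rightarrow> 'a list \<Rightarrow> bool" where
  "synchronising A Q \<delta> w \<longleftrightarrow> set w \<subseteq> A \<and> (\<forall>p\<in>Q. \<forall>q\<in>Q. dstar \<delta> p w = dstar \<delta> q w)"

definition zero_automaton :: "'a set \<Rightarrow> 's set \<Rightarrow> ('s \<Rightarrow> 'a \<Rightarrow> 's) \<Rightarrow> bool" where
  "zero_automaton A Q \<delta> \<longleftrightarrow> (\<exists>z\<in>Q. is_sink A \<delta> z) \<and> (\<exists>w. synchronising A Q \<delta> w)"

text \<open>Minimal automaton of L: the automaton of left quotients
  u^-1 L = {w. u @ w \<in> L}, with initial state L and final states those containing
  the empty word.\<close>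
definition lquot :: "'a list \<Rightarrow> 'a list set \<Rightarrow> 'a list set" where
  "lquot u L = {w. u @ w \<in> L}"

definition min_states :: "'a set \<Rightarrow> 'a list set \<Rightarrow> 'a list set set" where
  "min_states A L = {lquot u L | u. set u \<subseteq> A}"

definition min_delta :: "'a list set \<Rightarrow> 'a \<Rightarrow> 'a list set" where
  "min_delta X a = {w. a # w \<in> X}"

definition min_init :: "'a list set \<Rightarrow> 'a list set" where
  "min_init L = L"

definition min_final :: "'a set \<Rightarrow> 'a list set \<Rightarrow> 'a list set set" where
  "min_final A L = {X \<in> min_states A L. [] \<in> X}"

end

theory Submission
  imports Defs
begin

text \<open>
  Let \<open>f n X\<close> be the proportion of words of length \<open>n\<close> lying in \<open>X\<close>. Splitting off the
  first letter shows that \<open>f (n+1) X\<close> is the mean of \<open>f n (a\<inverse>X)\<close> over the letters \<open>a\<close>, and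
  \<open>1 - f\<close> obeys the same recurrence. So both claims have the form "\<open>g n L \<rightarrow> 0\<close>" for a
  solution \<open>g\<close> with values in [0,1] that vanishes on a sink \<open>T\<close>: the empty language
  for \<open>g = f\<close>, the language of all words for \<open>g = 1 - f\<close>.

  If a word \<open>w\<close> sends every quotient of \<open>L\<close> to \<open>T\<close>, then during every \<open>|w|\<close> steps a
  fraction \<open>|A|\<^sup>-\<^sup>|\<^sup>w\<^sup>|\<close> of the remaining mass falls into \<open>T\<close>, so \<open>g n L\<close> decays
  geometrically. Conversely, \<open>g n (a\<inverse>X) \<le> |A| \<cdot> g (n+1) X\<close>, so \<open>g n L \<rightarrow> 0\<close> forces
  \<open>g n X \<rightarrow> 0\<close> for every quotient \<open>X\<close>. On a transition-closed set of quotients avoiding \<open>T\<close>,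
  from each of which some word leads to a quotient with \<open>g 0 = 1\<close>, the sums of \<open>g\<close> over
  windows of fixed length stay bounded away from 0. Hence every quotient reaches \<open>T\<close>,
  and concatenating such words gives a synchronising word.
\<close>

lemma lquot_Nil [simp]: "lquot [] X = X"
  by (simp add: lquot_def)

lemma lquot_append: "lquot (u @ v) X = lquot v (lquot u X)"
  by (simp add: lquot_def)

lemma lquot_Cons: "lquot (a # v) X = lquot v (lquot [a] X)"
  using lquot_append[of "[a]" v X] by simp

lemma min_delta_eq_lquot: "min_delta X a = lquot [a] X"
  by (simp add: min_delta_def lquot_def)

lemma dstar_min_delta: "dstar min_delta X v = lquot v X"
  unfolding dstar_def
proof (induction v arbitrary: X)
  case (Cons a v)
  then show ?case by (simp add: min_delta_eq_lquot lquot_Cons[of a v X])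
qed simp

lemma lquot_sink:
  assumes "is_sink A min_delta z" and "set v \<subseteq> A"
  shows "lquot v z = z"
  using assms(2)
proof (induction v)
  case (Cons a v)
  then show ?case
    using assms(1) by (simp add: lquot_Cons[of a v z] is_sink_def min_delta_eq_lquot)
qed simp

lemma min_states_iff: "X \<in> min_states A L \<longleftrightarrow> (\<exists>u. set u \<subseteq> A \<and> X = lquot u L)"
  unfolding min_states_def by blast

lemma lquot_in_min_states:
  assumes "X \<in> min_states A L" and "set v \<subseteq> A"
  shows "lquot v X \<in> min_states A L"
proof -
  obtain u where "set u \<subseteq> A" "X = lquot u L"
    using assms(1) by (auto simp: min_states_iff)
  moreover have "set (u @ v) \<subseteq> A" using \<open>set u \<subseteq> A\<close> assms(2) by simp
  ultimately show ?thesis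
    unfolding min_states_iff by (metis lquot_append)
qed

lemma min_states_subset_lists:
  assumes "L \<subseteq> {w. set w \<subseteq> A}" and "X \<in> min_states A L"
  shows "X \<subseteq> {w. set w \<subseteq> A}"
proof
  fix x assume "x \<in> X"
  obtain u where "X = lquot u L" using assms(2) by (auto simp: min_states_iff)
  then have "u @ x \<in> L" using \<open>x \<in> X\<close> by (simp add: lquot_def)
  then have "set (u @ x) \<subseteq> A" using assms(1) by blast
  then show "x \<in> {w. set w \<subseteq> A}" by simp
qed

lemma finite_min_states:
  assumes "regular A L"
  shows "finite (min_states A L)"
proof -
  obtain Q :: "nat set" and \<delta> q0 F where dfa: "dfa A Q \<delta> q0 F" and L: "dfa_lang A \<delta> q0 F = L"
    using assms unfolding regular_def by blast
  let ?lang_from = "\<lambda>q. {w. set w \<subseteq> A \<and> dstar \<delta> q w \<in> F}"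
  have dstar_in_Q: "dstar \<delta> q u \<in> Q" if "set u \<subseteq> A" "q \<in> Q" for u q
    using dfa that unfolding dfa_def dstar_def by (induction u arbitrary: q) auto
  have "min_states A L \<subseteq> ?lang_from ` Q"
  proof
    fix X assume "X \<in> min_states A L"
    then obtain u where u: "set u \<subseteq> A" "X = lquot u L"
      by (auto simp: min_states_iff)
    then have "X = ?lang_from (dstar \<delta> q0 u)"
      using L by (auto simp: lquot_def dfa_lang_def dstar_def)
    moreover have "dstar \<delta> q0 u \<in> Q"
      using dstar_in_Q u dfa by (auto simp: dfa_def)
    ultimately show "X \<in> ?lang_from ` Q" by blast
  qed
  moreover have "finite Q" using dfa by (simp add: dfa_def)
  ultimately show ?thesis using finite_subset by blast
qed

lemma sink_in_min_final_iff:
  assumes "L \<subseteq> {w. set w \<subseteq> A}" and "z \<in> min_states A L" and "is_sink A min_delta z"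
  shows "z \<in> min_final A L \<longleftrightarrow> z = {w. set w \<subseteq> A}"
proof
  assume "z \<in> min_final A L"
  then have "[] \<in> z" by (simp add: min_final_def)
  have "v \<in> z" if "set v \<subseteq> A" for v
  proof -
    have "[] \<in> lquot v z" using lquot_sink[OF assms(3) that] \<open>[] \<in> z\<close> by simp
    then show ?thesis by (simp add: lquot_def)
  qed
  then show "z = {w. set w \<subseteq> A}"
    using min_states_subset_lists[OF assms(1,2)] by blast
next
  assume "z = {w. set w \<subseteq> A}"
  then show "z \<in> min_final A L" using assms(2) by (simp add: min_final_def)
qed

lemma sink_notin_min_final_iff:
  assumes "L \<subseteq> {w. set w \<subseteq> A}" and "z \<in> min_states A L" and "is_sink A min_delta z"
  shows "z \<notin> min_final A L \<longleftrightarrow> z = {}"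
proof
  assume "z \<notin> min_final A L"
  then have "[] \<notin> z" using assms(2) by (simp add: min_final_def)
  have "v \<notin> z" if "set v \<subseteq> A" for v
  proof
    assume "v \<in> z"
    then have "[] \<in> lquot v z" by (simp add: lquot_def)
    then show False using lquot_sink[OF assms(3) that] \<open>[] \<notin> z\<close> by simp
  qed
  then show "z = {}"
    using min_states_subset_lists[OF assms(1,2)] by blast
qed (simp add: min_final_def)

lemma synchronising_word_into_sink:
  assumes "finite S"
    and reach: "\<And>X. X \<in> S \<Longrightarrow> \<exists>v. set v \<subseteq> A \<and> lquot v X = T"
    and closed: "\<And>X v. X \<in> S \<Longrightarrow> set v \<subseteq> A \<Longrightarrow> lquot v X \<in> S"
    and sink: "\<And>v. set v \<subseteq> A \<Longrightarrow> lquot v T = T"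
  shows "\<exists>w. set w \<subseteq> A \<and> (\<forall>X\<in>S. lquot w X = T)"
proof -
  have "\<exists>w. set w \<subseteq> A \<and> (\<forall>X\<in>F. lquot w X = T)" if "finite F" "F \<subseteq> S" for F
    using that
  proof (induction F rule: finite_induct)
    case empty
    show ?case by (intro exI[of _ "[]"]) simp
  next
    case (insert X F)
    then obtain w where w: "set w \<subseteq> A" "\<forall>Y\<in>F. lquot w Y = T" by auto
    obtain v where v: "set v \<subseteq> A" "lquot v (lquot w X) = T"
      using reach closed insert.prems w(1) by blast
    show ?case
      using w v sink by (intro exI[of _ "w @ v"]) (auto simp: lquot_append)
  qed
  then show ?thesis using assms(1) by blast
qed

definition freq :: "'a set \<Rightarrow> nat \<Rightarrow> 'a list set \<Rightarrow> real" where
  "freq A n X = real (card (X \<inter> words A n)) / real (card A ^ n)"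

lemma has_density_iff_freq: "has_density A L d \<longleftrightarrow> (\<lambda>n. freq A n L) \<longlonglongrightarrow> d"
  by (simp add: has_density_def freq_def)

lemma finite_words: "finite A \<Longrightarrow> finite (words A n)"
  unfolding words_def using finite_lists_length_eq by blast

lemma card_words: "finite A \<Longrightarrow> card (words A n) = card A ^ n"
  unfolding words_def by (rule card_lists_length_eq)

lemma card_words_Suc:
  assumes "finite A"
  shows "card (X \<inter> words A (Suc n)) = (\<Sum>a\<in>A. card (lquot [a] X \<inter> words A n))"
proof -
  have "X \<inter> words A (Suc n) = (\<Union>a\<in>A. (#) a ` (lquot [a] X \<inter> words A n))"
    by (auto simp: words_def lquot_def length_Suc_conv)
  also have "card \<dots> = (\<Sum>a\<in>A. card ((#) a ` (lquot [a] X \<inter> words A n)))"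
    by (rule card_UN_disjoint) (auto simp: assms finite_words)
  also have "\<dots> = (\<Sum>a\<in>A. card (lquot [a] X \<inter> words A n))"
    by (intro sum.cong refl card_image) (auto simp: inj_on_def)
  finally show ?thesis .
qed

lemma freq_Suc:
  assumes "finite A" "A \<noteq> {}"
  shows "freq A (Suc n) X = (\<Sum>a\<in>A. freq A n (lquot [a] X)) / real (card A)"
  using assms
  by (simp add: freq_def card_words_Suc sum_divide_distrib[symmetric] card_gt_0_iff field_simps)

lemma freq_nonneg: "0 \<le> freq A n X"
  by (simp add: freq_def)

lemma freq_lists:
  assumes "finite A" "A \<noteq> {}"
  shows "freq A n {w. set w \<subseteq> A} = 1"
proof -
  have "{w. set w \<subseteq> A} \<inter> words A n = words A n" by (auto simp: words_def)
  then show ?thesis using assms by (simp add: freq_def card_words card_gt_0_iff)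
qed

lemma freq_le_1:
  assumes "finite A" "A \<noteq> {}"
  shows "freq A n X \<le> 1"
proof -
  have "card (X \<inter> words A n) \<le> card (words A n)"
    by (intro card_mono finite_words assms(1)) auto
  then show ?thesis using assms by (simp add: freq_def card_words card_gt_0_iff)
qed

lemma freq_0: "freq A 0 X = (if [] \<in> X then 1 else 0)"
proof -
  have "words A 0 = {[]}" by (auto simp: words_def)
  then show ?thesis by (auto simp: freq_def)
qed

locale mean_recurrence =
  fixes A :: "'a set" and g :: "nat \<Rightarrow> 'a list set \<Rightarrow> real"
  assumes finite_alphabet: "finite A" and nonempty_alphabet: "A \<noteq> {}"
    and g_Suc: "\<And>n X. g (Suc n) X = (\<Sum>a\<in>A. g n (lquot [a] X)) / real (card A)"
    and g_nonneg: "\<And>n X. 0 \<le> g n X" and g_le_1: "\<And>n X. g n X \<le> 1"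
begin

abbreviation N :: real where "N \<equiv> real (card A)"

lemma N_ge_1: "N \<ge> 1"
  using finite_alphabet nonempty_alphabet by (simp add: Suc_leI card_gt_0_iff)

lemma g_lquot_letter_le:
  assumes "a \<in> A"
  shows "g n (lquot [a] X) \<le> N * g (Suc n) X"
proof -
  have "g n (lquot [a] X) \<le> (\<Sum>b\<in>A. g n (lquot [b] X))"
    using assms finite_alphabet by (intro member_le_sum) (auto intro: g_nonneg)
  also have "\<dots> = N * g (Suc n) X"
    using g_Suc[of n X] N_ge_1 by simp
  finally show ?thesis .
qed

lemma g_lquot_le: "set v \<subseteq> A \<Longrightarrow> g n (lquot v X) \<le> N ^ length v * g (n + length v) X"
proof (induction v arbitrary: X)
  case (Cons a v)
  have "g n (lquot (a # v) X) = g n (lquot v (lquot [a] X))"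
    by (simp add: lquot_Cons[of a v X])
  also have "\<dots> \<le> N ^ length v * g (n + length v) (lquot [a] X)"
    using Cons by simp
  also have "\<dots> \<le> N ^ length v * (N * g (Suc (n + length v)) X)"
    using Cons.prems g_lquot_letter_le N_ge_1 by (intro mult_left_mono) auto
  finally show ?case by (simp add: mult.assoc mult.left_commute)
qed simp

lemma tendsto_zero_lquot:
  assumes "(\<lambda>n. g n X) \<longlonglongrightarrow> 0" and "set v \<subseteq> A"
  shows "(\<lambda>n. g n (lquot v X)) \<longlonglongrightarrow> 0"
proof (rule tendsto_sandwich[where f = "\<lambda>_. 0" and h = "\<lambda>n. N ^ length v * g (n + length v) X"])
  show "(\<lambda>n. N ^ length v * g (n + length v) X) \<longlonglongrightarrow> 0"
    using LIMSEQ_ignore_initial_segment[OF assms(1)] tendsto_mult_right_zero by blast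
qed (use g_nonneg g_lquot_le assms(2) in auto)

text \<open>
  The bound holds at time 0 since \<open>K\<close> exceeds the lengths of the escaping words, and it
  propagates because the recurrence averages window sums over successor states, which lie
  in \<open>C\<close> again.
\<close>

lemma window_sum_lower_bound:
  assumes "finite C"
    and closed: "\<And>X a. X \<in> C \<Longrightarrow> a \<in> A \<Longrightarrow> lquot [a] X \<in> C"
    and escape: "\<And>X. X \<in> C \<Longrightarrow> \<exists>v. set v \<subseteq> A \<and> g 0 (lquot v X) = 1"
  obtains K where "\<And>n X. X \<in> C \<Longrightarrow> 1 / N ^ K \<le> (\<Sum>j<K. g (n + j) X)"
proof -
  obtain v where v: "\<And>X. X \<in> C \<Longrightarrow> set (v X) \<subseteq> A \<and> g 0 (lquot (v X) X) = 1"
    using escape by metis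
  define K where "K = Suc (Max (length ` v ` C))"
  have length_v: "length (v X) < K" if "X \<in> C" for X
    using that assms(1) unfolding K_def by (simp add: le_imp_less_Suc)
  have "1 / N ^ K \<le> (\<Sum>j<K. g (n + j) X)" if "X \<in> C" for n X
    using that
  proof (induction n arbitrary: X)
    case 0
    let ?l = "length (v X)"
    have "1 \<le> N ^ ?l * g ?l X"
      using g_lquot_le[of "v X" 0 X] v[OF 0] by simp
    then have "1 / N ^ ?l \<le> g ?l X"
      using N_ge_1 by (simp add: field_simps)
    moreover have "1 / N ^ K \<le> 1 / N ^ ?l"
      using N_ge_1 length_v[OF 0] by (intro divide_left_mono power_increasing) auto
    moreover have "g ?l X \<le> (\<Sum>j<K. g j X)"
      using length_v[OF 0] by (intro member_le_sum) (auto intro: g_nonneg)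
    ultimately show ?case by simp
  next
    case (Suc n)
    have "1 / N ^ K = (\<Sum>a\<in>A. 1 / N ^ K) / N"
      using N_ge_1 by simp
    also have "\<dots> \<le> (\<Sum>a\<in>A. \<Sum>j<K. g (n + j) (lquot [a] X)) / N"
      using Suc closed N_ge_1 by (intro divide_right_mono sum_mono) auto
    also have "\<dots> = (\<Sum>j<K. g (Suc n + j) X)"
      by (simp add: g_Suc sum_divide_distrib[symmetric] sum.swap[of _ A])
    finally show ?case .
  qed
  then show thesis using that by blast
qed

lemma closed_escaping_not_tendsto_zero:
  assumes "finite C" and "X \<in> C"
    and "\<And>X a. X \<in> C \<Longrightarrow> a \<in> A \<Longrightarrow> lquot [a] X \<in> C"
    and "\<And>X. X \<in> C \<Longrightarrow> \<exists>v. set v \<subseteq> A \<and> g 0 (lquot v X) = 1"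
  shows "\<not> (\<lambda>n. g n X) \<longlonglongrightarrow> 0"
proof
  assume lim: "(\<lambda>n. g n X) \<longlonglongrightarrow> 0"
  obtain K where K: "\<And>n Y. Y \<in> C \<Longrightarrow> 1 / N ^ K \<le> (\<Sum>j<K. g (n + j) Y)"
    using window_sum_lower_bound[OF assms(1,3,4)] by metis
  have "(\<lambda>n. \<Sum>j<K. g (n + j) X) \<longlonglongrightarrow> 0"
    by (rule tendsto_null_sum) (rule LIMSEQ_ignore_initial_segment[OF lim])
  then have "1 / N ^ K \<le> 0"
    by (rule LIMSEQ_le_const) (use K[OF assms(2)] in blast)
  moreover have "0 < 1 / N ^ K" using N_ge_1 by simp
  ultimately show False by linarith
qed

lemma tendsto_zero_reaches:
  assumes "finite S"
    and closed: "\<And>X v. X \<in> S \<Longrightarrow> set v \<subseteq> A \<Longrightarrow> lquot v X \<in> S"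
    and escape: "\<And>Y. Y \<in> S \<Longrightarrow> Y \<noteq> T \<Longrightarrow> \<exists>v. set v \<subseteq> A \<and> g 0 (lquot v Y) = 1"
    and "X \<in> S" and "(\<lambda>n. g n X) \<longlonglongrightarrow> 0"
  shows "\<exists>v. set v \<subseteq> A \<and> lquot v X = T"
proof (rule ccontr)
  assume unreachable: "\<not> ?thesis"
  define C where "C = {lquot v X | v. set v \<subseteq> A}"
  have "C \<subseteq> S" using closed assms(4) by (auto simp: C_def)
  have "\<not> (\<lambda>n. g n X) \<longlonglongrightarrow> 0"
  proof (rule closed_escaping_not_tendsto_zero)
    show "finite C" using \<open>C \<subseteq> S\<close> assms(1) finite_subset by blast
    show "X \<in> C" unfolding C_def by (auto intro: exI[of _ "[]"])
    show "lquot [a] Y \<in> C" if "Y \<in> C" "a \<in> A" for Y a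
    proof -
      obtain v where "set v \<subseteq> A" "Y = lquot v X" using \<open>Y \<in> C\<close> by (auto simp: C_def)
      then have "set (v @ [a]) \<subseteq> A" "lquot [a] Y = lquot (v @ [a]) X"
        using \<open>a \<in> A\<close> by (simp_all add: lquot_append)
      then show ?thesis unfolding C_def by blast
    qed
    show "\<exists>v. set v \<subseteq> A \<and> g 0 (lquot v Y) = 1" if "Y \<in> C" for Y
      using that unreachable \<open>C \<subseteq> S\<close> escape by (auto simp: C_def)
  qed
  then show False using assms(5) by contradiction
qed

text \<open>
  Unfolding the recurrence \<open>|u|\<close> times, the prefix \<open>u\<close> carries weight \<open>N\<^sup>-\<^sup>|\<^sup>u\<^sup>|\<close> and every other
  prefix of length \<open>|u|\<close> contributes at most \<open>B\<close>.
\<close>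

lemma g_le_after_word:
  assumes closed: "\<And>X a. X \<in> S \<Longrightarrow> a \<in> A \<Longrightarrow> lquot [a] X \<in> S"
    and bound: "\<And>Y m. Y \<in> S \<Longrightarrow> m \<ge> n \<Longrightarrow> g m Y \<le> B" and "0 \<le> B"
  shows "Y \<in> S \<Longrightarrow> set u \<subseteq> A \<Longrightarrow>
     g (n + length u) Y \<le> (1 - 1 / N ^ length u) * B + g n (lquot u Y) / N ^ length u"
proof (induction u arbitrary: Y)
  case (Cons a u)
  let ?m = "n + length u"
  have "a \<in> A" using Cons.prems by simp
  have IH: "g ?m (lquot [a] Y) \<le> (1 - 1 / N ^ length u) * B + g n (lquot u (lquot [a] Y)) / N ^ length u"
    using Cons closed by simp
  have others: "(\<Sum>b\<in>A - {a}. g ?m (lquot [b] Y)) \<le> (N - 1) * B"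
  proof -
    have "(\<Sum>b\<in>A - {a}. g ?m (lquot [b] Y)) \<le> (\<Sum>b\<in>A - {a}. B)"
      using Cons.prems closed by (intro sum_mono bound) auto
    also have "\<dots> = (N - 1) * B"
      using \<open>a \<in> A\<close> finite_alphabet card_gt_0_iff[of A] by (auto simp: of_nat_diff Suc_leI)
    finally show ?thesis .
  qed
  have "g (n + length (a # u)) Y = (g ?m (lquot [a] Y) + (\<Sum>b\<in>A - {a}. g ?m (lquot [b] Y))) / N"
    using \<open>a \<in> A\<close> finite_alphabet by (simp add: g_Suc sum.remove)
  also have "\<dots> \<le> ((1 - 1 / N ^ length u) * B + g n (lquot u (lquot [a] Y)) / N ^ length u
                  + (N - 1) * B) / N"
    using IH others N_ge_1 by (intro divide_right_mono) auto
  also have "\<dots> = (1 - 1 / N ^ length (a # u)) * B + g n (lquot (a # u) Y) / N ^ length (a # u)"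
    using N_ge_1 by (simp add: lquot_Cons[of a u Y] field_simps)
  finally show ?case .
qed simp

lemma tendsto_zero_if_synchronised:
  assumes closed: "\<And>X a. X \<in> S \<Longrightarrow> a \<in> A \<Longrightarrow> lquot [a] X \<in> S"
    and vanish: "\<And>n. g n T = 0"
    and "set w \<subseteq> A" and sync: "\<And>X. X \<in> S \<Longrightarrow> lquot w X = T"
    and "X \<in> S"
  shows "(\<lambda>n. g n X) \<longlonglongrightarrow> 0"
proof -
  \<comment> \<open>a nonempty synchronising word, so that the blocks below make progress\<close>
  obtain a where "a \<in> A" using nonempty_alphabet by blast
  define w' where "w' = a # w"
  define k where "k = length w'"
  define c where "c = 1 - 1 / N ^ k"
  have "set w' \<subseteq> A" using \<open>a \<in> A\<close> \<open>set w \<subseteq> A\<close> by (simp add: w'_def)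
  have sync': "lquot w' Y = T" if "Y \<in> S" for Y
    using sync closed that \<open>a \<in> A\<close> by (simp add: w'_def lquot_Cons[of a w Y])
  have "0 \<le> c" "c < 1" using N_ge_1 by (auto simp: c_def)
  have decay: "\<forall>Y\<in>S. \<forall>n\<ge>m * k. g n Y \<le> c ^ m" for m
  proof (induction m)
    case 0
    show ?case using g_le_1 by simp
  next
    case (Suc m)
    show ?case
    proof (intro ballI allI impI)
      fix Y n assume "Y \<in> S" and "Suc m * k \<le> n"
      then have n: "n = (n - k) + length w'" "n - k \<ge> m * k"
        by (auto simp: k_def)
      have "g ((n - k) + length w') Y
              \<le> (1 - 1 / N ^ length w') * c ^ m + g (n - k) (lquot w' Y) / N ^ length w'"
        by (rule g_le_after_word[OF closed _ _ \<open>Y \<in> S\<close> \<open>set w' \<subseteq> A\<close>])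
          (use Suc n(2) \<open>0 \<le> c\<close> in auto)
      then show "g n Y \<le> c ^ Suc m"
        using n(1) sync'[OF \<open>Y \<in> S\<close>] vanish by (simp add: c_def k_def)
    qed
  qed
  show ?thesis
    unfolding LIMSEQ_iff
  proof (intro allI impI)
    fix r :: real assume "r > 0"
    obtain m where "c ^ m < r"
      using real_arch_pow_inv[OF \<open>r > 0\<close> \<open>c < 1\<close>] by blast
    have "\<bar>g n X\<bar> < r" if "n \<ge> m * k" for n
      using decay \<open>X \<in> S\<close> that g_nonneg[of n X] \<open>c ^ m < r\<close> by fastforce
    then have "\<forall>n\<ge>m * k. norm (g n X - 0) < r" by simp
    then show "\<exists>n0. \<forall>n\<ge>n0. norm (g n X - 0) < r" by blast
  qed
qed

theorem tendsto_zero_iff_zero_automaton: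
  assumes "L \<subseteq> {w. set w \<subseteq> A}" and "finite (min_states A L)"
    and T_sink: "is_sink A min_delta T"
    and vanish: "\<And>n. g n T = 0"
    and escape: "\<And>Y. Y \<subseteq> {w. set w \<subseteq> A} \<Longrightarrow> Y \<noteq> T \<Longrightarrow> \<exists>v. set v \<subseteq> A \<and> g 0 (lquot v Y) = 1"
  shows "(\<lambda>n. g n L) \<longlonglongrightarrow> 0 \<longleftrightarrow>
    zero_automaton A (min_states A L) min_delta \<and> T \<in> min_states A L"
    (is "_ \<longleftrightarrow> zero_automaton A ?S min_delta \<and> _")
proof -
  have "L \<in> ?S" using min_states_iff[of L A L] by (auto intro: exI[of _ "[]"])
  have closed: "\<And>X v. X \<in> ?S \<Longrightarrow> set v \<subseteq> A \<Longrightarrow> lquot v X \<in> ?S"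
    by (rule lquot_in_min_states)
  have T_absorbing: "\<And>v. set v \<subseteq> A \<Longrightarrow> lquot v T = T"
    by (rule lquot_sink[OF T_sink])
  show ?thesis
  proof
    assume lim: "(\<lambda>n. g n L) \<longlonglongrightarrow> 0"
    have reach: "\<exists>v. set v \<subseteq> A \<and> lquot v X = T" if "X \<in> ?S" for X
    proof (rule tendsto_zero_reaches[OF assms(2) closed _ that])
      show "\<exists>v. set v \<subseteq> A \<and> g 0 (lquot v Y) = 1" if "Y \<in> ?S" "Y \<noteq> T" for Y
        using escape min_states_subset_lists[OF assms(1)] that by blast
      obtain u where "set u \<subseteq> A" "X = lquot u L"
        using \<open>X \<in> ?S\<close> unfolding min_states_iff by blast
      then show "(\<lambda>n. g n X) \<longlonglongrightarrow> 0" using tendsto_zero_lquot[OF lim] by simp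
    qed
    obtain v where "set v \<subseteq> A" "lquot v L = T" using reach[OF \<open>L \<in> ?S\<close>] by blast
    then have "T \<in> ?S" using closed[OF \<open>L \<in> ?S\<close>] by blast
    obtain w where "set w \<subseteq> A" "\<forall>X\<in>?S. lquot w X = T"
      using synchronising_word_into_sink[OF assms(2) reach closed T_absorbing] by blast
    then have "synchronising A ?S min_delta w"
      by (simp add: synchronising_def dstar_min_delta)
    then show "zero_automaton A ?S min_delta \<and> T \<in> ?S"
      using T_sink \<open>T \<in> ?S\<close> unfolding zero_automaton_def by blast
  next
    assume "zero_automaton A ?S min_delta \<and> T \<in> ?S"
    then obtain w where w: "synchronising A ?S min_delta w" and "T \<in> ?S"
      unfolding zero_automaton_def by blast
    then have "set w \<subseteq> A" by (simp add: synchronising_def)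
    have sync: "lquot w X = T" if "X \<in> ?S" for X
    proof -
      have "lquot w X = lquot w T"
        using w that \<open>T \<in> ?S\<close> unfolding synchronising_def dstar_min_delta by blast
      then show ?thesis using T_absorbing[OF \<open>set w \<subseteq> A\<close>] by simp
    qed
    have "lquot [a] X \<in> ?S" if "X \<in> ?S" "a \<in> A" for X a
      using closed[of X "[a]"] that by simp
    then show "(\<lambda>n. g n L) \<longlonglongrightarrow> 0"
      using tendsto_zero_if_synchronised[OF _ vanish \<open>set w \<subseteq> A\<close> sync \<open>L \<in> ?S\<close>] by blast
  qed
qed

end

lemma lists_is_sink: "is_sink A min_delta {w. set w \<subseteq> A}"
  by (auto simp: is_sink_def min_delta_def)

lemma empty_is_sink: "is_sink A min_delta {}"
  by (simp add: is_sink_def min_delta_def)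

lemma density_zero_iff:
  assumes "finite A" "A \<noteq> {}" "L \<subseteq> {w. set w \<subseteq> A}" "finite (min_states A L)"
  shows "has_density A L 0 \<longleftrightarrow> zero_automaton A (min_states A L) min_delta \<and> {} \<in> min_states A L"
proof -
  interpret mean_recurrence A "freq A"
    by standard (simp_all add: assms(1,2) freq_nonneg freq_le_1 freq_Suc)
  show ?thesis
    unfolding has_density_iff_freq
  proof (rule tendsto_zero_iff_zero_automaton[OF assms(3,4) empty_is_sink])
    show "freq A n {} = 0" for n by (simp add: freq_def)
    show "\<exists>v. set v \<subseteq> A \<and> freq A 0 (lquot v Y) = 1"
      if "Y \<subseteq> {w. set w \<subseteq> A}" "Y \<noteq> {}" for Y
    proof -
      obtain v where "v \<in> Y" using \<open>Y \<noteq> {}\<close> by blast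
      then have "set v \<subseteq> A" using \<open>Y \<subseteq> {w. set w \<subseteq> A}\<close> by blast
      then show ?thesis using \<open>v \<in> Y\<close> by (intro exI[of _ v]) (simp add: freq_0 lquot_def)
    qed
  qed
qed

lemma density_one_iff:
  assumes "finite A" "A \<noteq> {}" "L \<subseteq> {w. set w \<subseteq> A}" "finite (min_states A L)"
  shows "has_density A L 1 \<longleftrightarrow>
    zero_automaton A (min_states A L) min_delta \<and> {w. set w \<subseteq> A} \<in> min_states A L"
proof -
  interpret mean_recurrence A "\<lambda>n X. 1 - freq A n X"
    by standard (simp_all add: assms(1,2) freq_nonneg freq_le_1 freq_Suc card_gt_0_iff
        sum_subtractf diff_divide_distrib)
  have "has_density A L 1 \<longleftrightarrow> (\<lambda>n. 1 - freq A n L) \<longlonglongrightarrow> 0"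
    unfolding has_density_iff_freq LIM_zero_iff[symmetric, of "\<lambda>n. freq A n L"]
    using tendsto_minus_cancel_left[of "\<lambda>n. freq A n L - 1" 0 sequentially] by simp
  also have "\<dots> \<longleftrightarrow> zero_automaton A (min_states A L) min_delta \<and> {w. set w \<subseteq> A} \<in> min_states A L"
  proof (rule tendsto_zero_iff_zero_automaton[OF assms(3,4) lists_is_sink])
    show "1 - freq A n {w. set w \<subseteq> A} = 0" for n by (simp add: freq_lists assms(1,2))
    show "\<exists>v. set v \<subseteq> A \<and> 1 - freq A 0 (lquot v Y) = 1"
      if Y: "Y \<subseteq> {w. set w \<subseteq> A}" "Y \<noteq> {w. set w \<subseteq> A}" for Y
    proof -
      obtain v where "set v \<subseteq> A" "v \<notin> Y" using Y by blast
      then show ?thesis by (intro exI[of _ v]) (simp add: freq_0 lquot_def)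
    qed
  qed
  finally show ?thesis .
qed

theorem mainTheorem2:
  fixes A :: "'a set" and L :: "'a list set"
  assumes "finite A" and "A \<noteq> {}"
    and "L \<subseteq> {w. set w \<subseteq> A}"
    and "regular A L"
  shows "(has_density A L 1 \<longleftrightarrow>
            zero_automaton A (min_states A L) min_delta \<and>
            (\<exists>z\<in>min_states A L. is_sink A min_delta z \<and> z \<in> min_final A L))
       \<and> (has_density A L 0 \<longleftrightarrow>
            zero_automaton A (min_states A L) min_delta \<and>
            (\<exists>z\<in>min_states A L. is_sink A min_delta z \<and> z \<notin> min_final A L))"
proof -
  have finite: "finite (min_states A L)"
    using finite_min_states[OF assms(4)] .
  have "(\<exists>z\<in>min_states A L. is_sink A min_delta z \<and> z \<in> min_final A L)
          \<longleftrightarrow> {w. set w \<subseteq> A} \<in> min_states A L"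
    using sink_in_min_final_iff[OF assms(3)] lists_is_sink by blast
  moreover have "(\<exists>z\<in>min_states A L. is_sink A min_delta z \<and> z \<notin> min_final A L)
          \<longleftrightarrow> {} \<in> min_states A L"
    using sink_notin_min_final_iff[OF assms(3)] empty_is_sink by blast
  ultimately show ?thesis
    using density_one_iff[OF assms(1-3) finite] density_zero_iff[OF assms(1-3) finite] by simp
qed

end
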